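(* Let $\ell$ be a commutative unital ring, $A,B$ (associative, not necessarily unital) $\ell$-algebras, and $n,r,s\geq 0$. Let $C:=B^{\mathfrak{S}_n}_r$ and let $H:A\to C^{\mathrm{sd}^sI}$ be an $\ell$-algebra homomorphism (a homotopy between the two homomorphisms $(d^0)^*\circ H,(d^1)^*\circ H:A\to C$, where $d^0,d^1:\Delta^0=\mathrm{sd}^s\Delta^0\to\mathrm{sd}^sI$ are induced by the two vertex inclusions of $I=\Delta^1$). Then there exists an $\ell$-algebra homomorphism $\widetilde{H}:A\to\widetilde{B}^{\mathfrak{S}_n}_{r+s}$ such that for $i=0,1$ \[(d^i)^*\circ\widetilde{H}=\tau\circ(d^i)^*\circ H,\] where on the left $(d^i)^*:\widetilde{B}^{\mathfrak{S}_n}_{r+s}\to B^{\mathfrak{S}_n}_{r+s}$ is induced by $\mathrm{id}\times d^i: I^n\cong I^n\times\Delta^0\to I^n\times I$, and $\tau:B^{\mathfrak{S}_n}_r\to B^{\mathfrak{S}_n}_{r+s}$ is the composite of $s$ transition maps of the directed diagram $B^{\mathfrak{S}_n}_\bullet$ (induced by the iterated last vertex map).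
   Context: $\mathbb{Z}^\Delta$ is the simplicial ring $[p]\mapsto \mathbb{Z}[t_0,\dots,t_p]/\langle 1-\sum t_i\rangle$ (an order preserving $\varphi:[p]\to[q]$ acts by $t_i\mapsto\sum_{\varphi(j)=i}t_j$). For an $\ell$-algebra $D$, $D^\Delta$ is the simplicial $\ell$-algebra $[p]\mapsto D\otimes_{\mathbb{Z}}\mathbb{Z}^{\Delta^p}$, and for a simplicial set $X$, $D^X:=\mathrm{Hom}_{\mathbb{S}}(X,D^\Delta)$ with pointwise operations. $\mathrm{sd}$ is the subdivision functor and $\gamma:\mathrm{sd}\to\mathrm{id}$ the last vertex map. For a finite simplicial set $K$ with simplicial subset $L$, $D^{(K,L)}_r:=\ker(D^{\mathrm{sd}^rK}\to D^{\mathrm{sd}^rL})$, and $D^{(K,L)}_\bullet$ is the directed diagram $D^{(K,L)}_0\to D^{(K,L)}_1\to\cdots$ with maps induced by $\gamma_{\mathrm{sd}^rK}:\mathrm{sd}^{r+1}K\to\mathrm{sd}^rK$. $I=\Delta^1$, $\partial I=\{0,1\}$, $I^n$ is the $n$-fold product ($I^0=\Delta^0$), $\partial I^n=\bigcup_j I\times\cdots\times\partial I\times\cdots\times I$ ($\partial I^0=\emptyset$). Notation: $B^{\mathfrak{S}_n}_r:=B^{(I^n,\partial I^n)}_r$ and $\widetilde{B}^{\mathfrak{S}_n}_r:=B^{(I^n\times I,\partial I^n\times I)}_r$. *)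

theory Defs
  imports Complex_Main "HOL-Library.Poly_Mapping" "HOL-Library.Function_Algebras" "HOL-Library.FSet"
begin

definition l_algebra :: "('l::comm_ring_1 \<Rightarrow> 'a::ring \<Rightarrow> 'a) \<Rightarrow> bool" where
  "l_algebra sc \<longleftrightarrow> Modules.module sc \<and>
     (\<forall>c x y. sc c (x * y) = sc c x * y \<and> sc c (x * y) = x * sc c y)"

text \<open>l-algebra homomorphism from the algebra on type 'a into the sub-algebra with carrier Cc
  of the ambient ring type 'c (operations of the ambient type, scaling scC).\<close>
definition l_alg_hom ::
  "('l::comm_ring_1 \<Rightarrow> 'a::ring \<Rightarrow> 'a) \<Rightarrow> ('l \<Rightarrow> 'c::ring \<Rightarrow> 'c) \<Rightarrow> 'c set \<Rightarrow> ('a \<Rightarrow> 'c) \<Rightarrow> bool" where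
  "l_alg_hom scA scC Cc h \<longleftrightarrow> (\<forall>x. h x \<in> Cc) \<and> (\<forall>x y. h (x + y) = h x + h y)
     \<and> (\<forall>x y. h (x * y) = h x * h y) \<and> (\<forall>c x. h (scA c x) = scC c (h x))"

text \<open>D \<otimes> Z[t_0,...,t_p]/(1 - sum t_i) is represented in the normal form D[t_1,...,t_p]
  (t_0 eliminated via t_0 = 1 - t_1 - ... - t_p): polynomials in the variables 1..p with
  coefficients in D.\<close>
type_synonym 'd simplexalg = "(nat \<Rightarrow>\<^sub>0 nat) \<Rightarrow>\<^sub>0 'd"

definition dlevel :: "'d set \<Rightarrow> nat \<Rightarrow> 'd::zero simplexalg set" where
  "dlevel Dc p = {P. \<forall>\<alpha>\<in>Poly_Mapping.keys P. Poly_Mapping.lookup P \<alpha> \<in> Dc \<and> Poly_Mapping.keys \<alpha> \<subseteq> {1..p}}"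

definition pscale :: "('l \<Rightarrow> 'd::zero \<Rightarrow> 'd) \<Rightarrow> 'l \<Rightarrow> 'd simplexalg \<Rightarrow> 'd simplexalg" where
  "pscale sc c P = Poly_Mapping.map (sc c) P"

definition fscale :: "('l \<Rightarrow> 'd::zero \<Rightarrow> 'd) \<Rightarrow> 'l \<Rightarrow> ('x \<Rightarrow> 'd simplexalg) \<Rightarrow> 'x \<Rightarrow> 'd simplexalg" where
  "fscale sc c f = (\<lambda>x. pscale sc c (f x))"

definition tvar :: "nat \<Rightarrow> int simplexalg" where
  "tvar j = Poly_Mapping.single (Poly_Mapping.single j 1) 1"

text \<open>The image of the coordinate t_j of Z^{Delta^p} in the normal form Z[t_1..t_p].\<close>
definition bary :: "nat \<Rightarrow> nat \<Rightarrow> int simplexalg" where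
  "bary p j = (if j = 0 then 1 - (\<Sum>k\<in>{1..p}. tvar k) else tvar j)"

text \<open>Action of an order preserving phi : [p] -> [q] (D^Delta_q -> D^Delta_p),
  t_i |-> sum over phi j = i of t_j, extended D-linearly (integers act through l).\<close>
definition sact :: "('l::comm_ring_1 \<Rightarrow> 'd::ab_group_add \<Rightarrow> 'd) \<Rightarrow> (nat \<Rightarrow> nat) \<Rightarrow> nat
    \<Rightarrow> 'd simplexalg \<Rightarrow> 'd simplexalg" where
  "sact sc \<phi> p P = (\<Sum>\<alpha>\<in>Poly_Mapping.keys P. Poly_Mapping.map (\<lambda>m. sc (of_int m) (Poly_Mapping.lookup P \<alpha>))
      (\<Prod>i\<in>Poly_Mapping.keys \<alpha>. (\<Sum>j\<in>{j. j \<le> p \<and> \<phi> j = i}. bary p j) ^ Poly_Mapping.lookup \<alpha> i))"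

definition monotone_map :: "nat \<Rightarrow> nat \<Rightarrow> (nat \<Rightarrow> nat) \<Rightarrow> bool" where
  "monotone_map p q \<phi> \<longleftrightarrow> (\<forall>i j. i \<le> j \<longrightarrow> j \<le> p \<longrightarrow> \<phi> i \<le> \<phi> j) \<and> (\<forall>j\<le>p. \<phi> j \<le> q)"

text \<open>Vertices: points of {0,1}^m (Leaf) and, for subdivisions, nondegenerate simplices (Node).\<close>
datatype hf = Leaf "bool list" | Node "hf fset"

fun hle :: "hf \<Rightarrow> hf \<Rightarrow> bool" where
  "hle (Leaf xs) (Leaf ys) = list_all2 (\<le>) xs ys"
| "hle (Node A) (Node B) = (A |\<subseteq>| B)"
| "hle _ _ = False"

definition chain_hf :: "hf fset \<Rightarrow> bool" where
  "chain_hf c \<longleftrightarrow> (\<forall>x\<in>fset c. \<forall>y\<in>fset c. hle x y \<or> hle y x)"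

text \<open>A complex is given by its set of nondegenerate simplices (nonempty chains);
  its p-simplices are the weakly increasing sequences of length p+1 spanning one of them.\<close>
definition simplices :: "hf fset set \<Rightarrow> nat \<Rightarrow> hf list set" where
  "simplices S p = {xs. length xs = Suc p \<and> sorted_wrt hle xs \<and> fset_of_list xs \<in> S}"

definition all_simplices :: "hf fset set \<Rightarrow> hf list set" where
  "all_simplices S = (\<Union>p. simplices S p)"

text \<open>Subdivision: nerve of the poset of nondegenerate simplices.\<close>
definition sd :: "hf fset set \<Rightarrow> hf fset set" where
  "sd S = {c. c \<noteq> {||} \<and> fset c \<subseteq> Node ` S \<and> chain_hf c}"

definition cube :: "nat \<Rightarrow> hf fset set" where
  "cube n = {c. c \<noteq> {||} \<and> fset c \<subseteq> Leaf ` {xs. length xs = n} \<and> chain_hf c}"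

definition cube_bdry :: "nat \<Rightarrow> hf fset set" where
  "cube_bdry n = {c \<in> cube n. \<exists>j<n. \<exists>b. \<forall>x\<in>fset c. \<exists>xs. x = Leaf xs \<and> xs ! j = b}"

text \<open>I^n x I = I^(n+1) (last coordinate is the I factor), and dI^n x I.\<close>
definition cyl_bdry :: "nat \<Rightarrow> hf fset set" where
  "cyl_bdry n = {c \<in> cube (Suc n). \<exists>j<n. \<exists>b. \<forall>x\<in>fset c. \<exists>xs. x = Leaf xs \<and> xs ! j = b}"

text \<open>sd^k of the simplicial map induced by a vertex map g (for every k).\<close>
primrec vmap :: "(bool list \<Rightarrow> bool list) \<Rightarrow> hf \<Rightarrow> hf" where
  "vmap g (Leaf xs) = Leaf (g xs)"
| "vmap g (Node A) = Node (fimage (vmap g) A)"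

fun lastv :: "hf \<Rightarrow> hf" where
  "lastv (Node A) = (THE x. x |\<in>| A \<and> (\<forall>y. y |\<in>| A \<longrightarrow> hle y x))"
| "lastv (Leaf xs) = Leaf xs"

text \<open>The vertex of sd^s Delta^0 and its images d^i in sd^s I.\<close>
definition sdpt :: "nat \<Rightarrow> hf" where
  "sdpt s = ((\<lambda>v. Node {|v|}) ^^ s) (Leaf [])"

definition d_vertex :: "nat \<Rightarrow> bool \<Rightarrow> hf" where
  "d_vertex s i = vmap (\<lambda>_. [i]) (sdpt s)"

text \<open>D^X = Hom(X, D^Delta), for the simplicial set X of complex S; Dc is the carrier of D
  inside the ambient type 'd.\<close>
definition smaps :: "('l::comm_ring_1 \<Rightarrow> 'd::ab_group_add \<Rightarrow> 'd) \<Rightarrow> 'd set \<Rightarrow> hf fset set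
    \<Rightarrow> (hf list \<Rightarrow> 'd simplexalg) set" where
  "smaps sc Dc S = {f.
     (\<forall>p. \<forall>xs\<in>simplices S p. f xs \<in> dlevel Dc p) \<and>
     (\<forall>xs. xs \<notin> all_simplices S \<longrightarrow> f xs = 0) \<and>
     (\<forall>p q \<phi> xs. monotone_map p q \<phi> \<longrightarrow> xs \<in> simplices S q \<longrightarrow>
        f (map (\<lambda>j. xs ! \<phi> j) [0..<Suc p]) = sact sc \<phi> p (f xs))}"

text \<open>D^{(K,L)}_r = ker(D^{sd^r K} -> D^{sd^r L}).\<close>
definition rel_alg :: "('l::comm_ring_1 \<Rightarrow> 'd::ab_group_add \<Rightarrow> 'd) \<Rightarrow> 'd set \<Rightarrow> hf fset set
    \<Rightarrow> hf fset set \<Rightarrow> nat \<Rightarrow> (hf list \<Rightarrow> 'd simplexalg) set" where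
  "rel_alg sc Dc K L r = {f \<in> smaps sc Dc ((sd ^^ r) K).
     \<forall>xs\<in>all_simplices ((sd ^^ r) L). f xs = 0}"

definition BS :: "('l::comm_ring_1 \<Rightarrow> 'b::ab_group_add \<Rightarrow> 'b) \<Rightarrow> nat \<Rightarrow> nat
    \<Rightarrow> (hf list \<Rightarrow> 'b simplexalg) set" where
  "BS sc n r = rel_alg sc UNIV (cube n) (cube_bdry n) r"

definition BSt :: "('l::comm_ring_1 \<Rightarrow> 'b::ab_group_add \<Rightarrow> 'b) \<Rightarrow> nat \<Rightarrow> nat
    \<Rightarrow> (hf list \<Rightarrow> 'b simplexalg) set" where
  "BSt sc n r = rel_alg sc UNIV (cube (Suc n)) (cyl_bdry n) r"

definition pullback :: "hf fset set \<Rightarrow> (hf \<Rightarrow> hf) \<Rightarrow> (hf list \<Rightarrow> 'd::zero) \<Rightarrow> hf list \<Rightarrow> 'd" where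
  "pullback S g f xs = (if xs \<in> all_simplices S then f (map g xs) else 0)"

text \<open>Evaluation at a vertex v, for maps Delta^0 -> C^Delta: C^{Delta^0} = C^Delta_0 = C.\<close>
definition eval_pt :: "(hf list \<Rightarrow> 'c::zero simplexalg) \<Rightarrow> hf \<Rightarrow> 'c" where
  "eval_pt F v = Poly_Mapping.lookup (F [v]) 0"

end

theory Submission
  imports Defs
begin

text \<open>Let S = sd^(r+s) (I^n \<times> I). The two projections of I^n \<times> I, followed by s resp. r
  last vertex maps, are simplicial maps S \<rightarrow> sd^r I^n and S \<rightarrow> sd^s I, and the first one sends
  sd^(r+s) (\<partial>I^n \<times> I) into sd^r \<partial>I^n. Along this pair, an element of (B^(sd^r I^n))^(sd^s I)
  determines an element of B^S: evaluate the inner maps and multiply the two polynomial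
  coordinates. This is natural in the simplices and multiplicative, so composing with H gives
  the homomorphism H~ into B~_(r+s). On I^n \<times> {i} the second projection is constant at the
  vertex d^i and the first is the iterated last vertex map, which yields the boundary identities.\<close>

section \<open>Linear extension on finitely supported maps\<close>

definition pm_extend :: "('k \<Rightarrow> 'v::zero \<Rightarrow> 'w::comm_monoid_add) \<Rightarrow> ('k \<Rightarrow>\<^sub>0 'v) \<Rightarrow> 'w" where
  "pm_extend g P = (\<Sum>k\<in>Poly_Mapping.keys P. g k (Poly_Mapping.lookup P k))"

lemma pm_extend_zero [simp]: "pm_extend g 0 = 0"
  by (simp add: pm_extend_def)

lemma pm_extend_single: "(\<And>k. g k 0 = 0) \<Longrightarrow> pm_extend g (Poly_Mapping.single k v) = g k v"
  unfolding pm_extend_def by (cases "v = 0") auto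

lemma keys_pm_extend:
  "Poly_Mapping.keys (pm_extend g P)
     \<subseteq> (\<Union>k\<in>Poly_Mapping.keys P. Poly_Mapping.keys (g k (Poly_Mapping.lookup P k)))"
  unfolding pm_extend_def by (rule keys_sum)

lemma additive_pm_extend:
  assumes "\<And>k. additive (g k)"
  shows "additive (pm_extend g)"
proof
  show "pm_extend g (P + Q) = pm_extend g P + pm_extend g Q" for P Q
    unfolding pm_extend_def
    by (rule setsum_keys_plus_distrib)
       (simp_all add: additive.zero[OF assms] additive.add[OF assms])
qed

lemma poly_mapping_sum_single:
  "P = (\<Sum>k\<in>Poly_Mapping.keys P. Poly_Mapping.single k (Poly_Mapping.lookup P k))"
  by (rule poly_mapping_eqI) (simp add: lookup_sum lookup_single when_def in_keys_iff)

lemma additive_eq_pm_extend: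
  assumes "additive f"
  shows "f P = pm_extend (\<lambda>k v. f (Poly_Mapping.single k v)) P"
  unfolding pm_extend_def
  by (subst poly_mapping_sum_single) (rule additive.sum[OF assms])

lemma additive_poly_mapping_eqI:
  assumes "additive f" "additive g"
    and "\<And>k v. f (Poly_Mapping.single k v) = g (Poly_Mapping.single k v)"
  shows "f P = g P"
  unfolding additive_eq_pm_extend[OF assms(1), of P] additive_eq_pm_extend[OF assms(2), of P]
    assms(3) ..

lemma additive_comp: "additive f \<Longrightarrow> additive g \<Longrightarrow> additive (\<lambda>x. f (g x))"
  by (rule additive.intro) (simp add: additive.add[of f] additive.add[of g])

lemma additive_mult_left: "additive (\<lambda>x. x * (y::'a::ring))"
  by (rule additive.intro) (simp add: distrib_right)

lemma additive_mult_right: "additive (\<lambda>x. (y::'a::ring) * x)"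
  by (rule additive.intro) (simp add: distrib_left)

lemma additive_single: "additive (Poly_Mapping.single k)"
  by (rule additive.intro) (simp add: single_add)

lemma additive_apply: "additive (\<lambda>f. f x)"
  by (rule additive.intro) simp

lemma lookup_map_zero:
  "f 0 = 0 \<Longrightarrow> Poly_Mapping.lookup (Poly_Mapping.map f P) k = f (Poly_Mapping.lookup P k)"
  by transfer (auto simp: when_def)

lemma keys_map_subset: "f 0 = 0 \<Longrightarrow> Poly_Mapping.keys (Poly_Mapping.map f P) \<subseteq> Poly_Mapping.keys P"
  by (auto simp: in_keys_iff lookup_map_zero)

lemma additive_map:
  assumes "additive f" shows "additive (Poly_Mapping.map f)"
  by (rule additive.intro, rule poly_mapping_eqI)
     (simp add: lookup_map_zero additive.zero[OF assms] additive.add[OF assms] lookup_add)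

lemma additive_mult_eqI:
  fixes f :: "('k::monoid_add \<Rightarrow>\<^sub>0 'a::ring) \<Rightarrow> 'c::ring"
  assumes "additive f" "additive g" "additive h"
    and "\<And>k v l w. f (Poly_Mapping.single k v * Poly_Mapping.single l w)
                 = g (Poly_Mapping.single k v) * h (Poly_Mapping.single l w)"
  shows "f (P * Q) = g P * h Q"
proof -
  have "f (Poly_Mapping.single k v * Q) = g (Poly_Mapping.single k v) * h Q" for k v
    by (rule additive_poly_mapping_eqI[OF additive_comp[OF assms(1) additive_mult_right]
          additive_comp[OF additive_mult_right assms(3)]]) (rule assms(4))
  then show ?thesis
    by (rule additive_poly_mapping_eqI[OF additive_comp[OF assms(1) additive_mult_left]
          additive_comp[OF additive_mult_left assms(2)]])
qed

section \<open>Flattening of iterated polynomial algebras\<close>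

definition mult_monom :: "(nat \<Rightarrow>\<^sub>0 nat) \<Rightarrow> 'd::ab_group_add simplexalg \<Rightarrow> 'd simplexalg" where
  "mult_monom \<alpha> P = pm_extend (\<lambda>\<beta> b. Poly_Mapping.single (\<alpha> + \<beta>) b) P"

text \<open>A level-p element of (D^\<Delta>)^\<Delta> is a polynomial in t' with coefficients polynomials
  in t; flattening sets t' = t, i.e. it is induced by the multiplication
  Z^\<Delta>p \<otimes> Z^\<Delta>p \<rightarrow> Z^\<Delta>p.\<close>
definition flatten :: "('d::ab_group_add simplexalg) simplexalg \<Rightarrow> 'd simplexalg" where
  "flatten F = pm_extend mult_monom F"

lemma additive_mult_monom: "additive (mult_monom \<alpha>)"
  unfolding mult_monom_def by (rule additive_pm_extend) (rule additive_single)

lemma mult_monom_single [simp]: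
  "mult_monom \<alpha> (Poly_Mapping.single \<beta> b) = Poly_Mapping.single (\<alpha> + \<beta>) b"
  unfolding mult_monom_def by (rule pm_extend_single) simp

lemma mult_monom_zero [simp]: "mult_monom \<alpha> 0 = 0"
  by (simp add: mult_monom_def)

lemma mult_monom_0: "mult_monom 0 P = P"
  by (rule additive_poly_mapping_eqI[OF additive_mult_monom additive.intro]) simp_all

lemma mult_monom_mult:
  "mult_monom (\<alpha> + \<beta>) (P * Q) = mult_monom \<alpha> P * mult_monom \<beta> (Q :: 'd::ring simplexalg)"
  by (rule additive_mult_eqI[OF additive_mult_monom additive_mult_monom additive_mult_monom])
     (simp add: mult_single add_ac)

lemma additive_flatten: "additive flatten"
  unfolding flatten_def by (rule additive_pm_extend) (rule additive_mult_monom)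

lemma flatten_single [simp]: "flatten (Poly_Mapping.single \<alpha> P) = mult_monom \<alpha> P"
  unfolding flatten_def by (rule pm_extend_single) simp

lemma flatten_mult: "flatten (F * G) = flatten F * flatten (G :: ('d::ring simplexalg) simplexalg)"
  by (rule additive_mult_eqI[OF additive_flatten additive_flatten additive_flatten])
     (simp add: mult_single mult_monom_mult)

lemma keys_flatten:
  assumes "\<beta> \<in> Poly_Mapping.keys (flatten F)"
  obtains \<alpha> \<gamma> where "\<alpha> \<in> Poly_Mapping.keys F" "\<gamma> \<in> Poly_Mapping.keys (Poly_Mapping.lookup F \<alpha>)"
    "\<beta> = \<alpha> + \<gamma>"
proof -
  obtain \<alpha> where \<alpha>: "\<alpha> \<in> Poly_Mapping.keys F"
    "\<beta> \<in> Poly_Mapping.keys (mult_monom \<alpha> (Poly_Mapping.lookup F \<alpha>))"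
    using assms keys_pm_extend[of mult_monom F] unfolding flatten_def by blast
  then show ?thesis
    using keys_pm_extend[of "\<lambda>\<gamma>. Poly_Mapping.single (\<alpha> + \<gamma>)"] that
    unfolding mult_monom_def by fastforce
qed

lemma map_mult:
  fixes f :: "'a::ring \<Rightarrow> 'b::ring"
  assumes "additive f" "\<And>a b. f (a * b) = f a * f b"
  shows "Poly_Mapping.map f (F * G)
     = Poly_Mapping.map f F * Poly_Mapping.map f (G :: 'k::monoid_add \<Rightarrow>\<^sub>0 'a)"
proof -
  have add: "additive (Poly_Mapping.map f)" by (rule additive_map[OF assms(1)])
  show ?thesis
    by (rule additive_mult_eqI[OF add add add])
       (simp add: mult_single additive.zero[OF assms(1)] assms(2))
qed

lemma lookup_pscale:
  "Modules.module sc \<Longrightarrow> Poly_Mapping.lookup (pscale sc c P) k = sc c (Poly_Mapping.lookup P k)"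
  unfolding pscale_def by (rule lookup_map_zero) (rule module.scale_zero_right)

lemma pscale_single:
  "Modules.module sc \<Longrightarrow> pscale sc c (Poly_Mapping.single k b) = Poly_Mapping.single k (sc c b)"
  unfolding pscale_def by (rule map_single) (rule module.scale_zero_right)

lemma module_pscale:
  assumes m: "Modules.module sc"
  shows "Modules.module (pscale sc)"
  by unfold_locales
     (rule poly_mapping_eqI,
      simp add: lookup_pscale[OF m] lookup_add module.scale_right_distrib[OF m]
        module.scale_left_distrib[OF m] module.scale_scale[OF m] module.scale_one[OF m])+

lemma module_fscale:
  assumes m: "Modules.module sc"
  shows "Modules.module (fscale sc)"
proof -
  interpret pscale: Modules.module "pscale sc" by (rule module_pscale[OF m])
  show ?thesis
    by unfold_locales
       (simp_all add: fscale_def fun_eq_iff pscale.scale_right_distrib pscale.scale_left_distrib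
         pscale.scale_scale)
qed

lemma additive_scale: "Modules.module sc \<Longrightarrow> additive (sc c)"
  by (rule additive.intro) (rule module.scale_right_distrib)

text \<open>The element b \<otimes> Q of D \<otimes> Z^\<Delta>p.\<close>
definition int_tensor ::
  "('l::comm_ring_1 \<Rightarrow> 'd::ab_group_add \<Rightarrow> 'd) \<Rightarrow> 'd \<Rightarrow> ('k \<Rightarrow>\<^sub>0 int) \<Rightarrow> ('k \<Rightarrow>\<^sub>0 'd)" where
  "int_tensor sc b Q = Poly_Mapping.map (\<lambda>m. sc (of_int m) b) Q"

definition sact_monomial :: "(nat \<Rightarrow> nat) \<Rightarrow> nat \<Rightarrow> (nat \<Rightarrow>\<^sub>0 nat) \<Rightarrow> int simplexalg" where
  "sact_monomial \<phi> p \<alpha> = (\<Prod>i\<in>Poly_Mapping.keys \<alpha>.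
      (\<Sum>j\<in>{j. j \<le> p \<and> \<phi> j = i}. bary p j) ^ Poly_Mapping.lookup \<alpha> i)"

lemma sact_eq_pm_extend:
  "sact sc \<phi> p P = pm_extend (\<lambda>\<alpha> b. int_tensor sc b (sact_monomial \<phi> p \<alpha>)) P"
  by (simp add: sact_def pm_extend_def int_tensor_def sact_monomial_def)

lemma sact_monomial_add:
  "sact_monomial \<phi> p (\<alpha> + \<beta>) = sact_monomial \<phi> p \<alpha> * sact_monomial \<phi> p \<beta>"
proof -
  let ?K = "Poly_Mapping.keys \<alpha> \<union> Poly_Mapping.keys \<beta>"
  have expand: "sact_monomial \<phi> p \<gamma> = (\<Prod>i\<in>?K.
      (\<Sum>j\<in>{j. j \<le> p \<and> \<phi> j = i}. bary p j) ^ Poly_Mapping.lookup \<gamma> i)"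
    if "Poly_Mapping.keys \<gamma> \<subseteq> ?K" for \<gamma>
    unfolding sact_monomial_def using that
    by (intro prod.mono_neutral_left) (auto simp: in_keys_iff)
  show ?thesis
    using expand[of "\<alpha> + \<beta>"] expand[of \<alpha>] expand[of \<beta>] keys_add[of \<alpha> \<beta>]
    by (simp add: lookup_add power_add prod.distrib)
qed

lemma sact_monomial_0 [simp]: "sact_monomial \<phi> p 0 = 1"
  by (simp add: sact_monomial_def)

lemma lookup_int_tensor:
  "Modules.module sc \<Longrightarrow>
     Poly_Mapping.lookup (int_tensor sc b Q) k = sc (of_int (Poly_Mapping.lookup Q k)) b"
  unfolding int_tensor_def by (rule lookup_map_zero) (simp add: module.scale_zero_left)

lemma int_tensor_zero [simp]: "Modules.module sc \<Longrightarrow> int_tensor sc 0 Q = 0"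
  by (rule poly_mapping_eqI) (simp add: lookup_int_tensor module.scale_zero_right)

lemma additive_int_tensor: "Modules.module sc \<Longrightarrow> additive (\<lambda>b. int_tensor sc b Q)"
  by (rule additive.intro, rule poly_mapping_eqI)
     (simp add: lookup_int_tensor lookup_add module.scale_right_distrib)

lemma additive_int_tensor_right: "Modules.module sc \<Longrightarrow> additive (int_tensor sc b)"
  by (rule additive.intro, rule poly_mapping_eqI)
     (simp add: lookup_int_tensor lookup_add module.scale_left_distrib)

lemma int_tensor_single:
  "Modules.module sc \<Longrightarrow>
     int_tensor sc b (Poly_Mapping.single k i) = Poly_Mapping.single k (sc (of_int i) b)"
  by (rule poly_mapping_eqI)
     (simp add: lookup_int_tensor lookup_single when_def module.scale_zero_left)

context
  fixes sc :: "'l::comm_ring_1 \<Rightarrow> 'd::ab_group_add \<Rightarrow> 'd"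
  assumes m: "Modules.module sc"
begin

lemma additive_sact: "additive (sact sc \<phi> p)"
  unfolding sact_eq_pm_extend by (rule additive_pm_extend) (rule additive_int_tensor[OF m])

lemma sact_single:
  "sact sc \<phi> p (Poly_Mapping.single \<alpha> b) = int_tensor sc b (sact_monomial \<phi> p \<alpha>)"
  unfolding sact_eq_pm_extend by (rule pm_extend_single) (simp add: m)

lemma flatten_pscale: "flatten (pscale (pscale sc) c F) = pscale sc c (flatten F)"
proof -
  have mp: "Modules.module (pscale sc)" by (rule module_pscale[OF m])
  have mult_monom_pscale: "mult_monom \<alpha> (pscale sc c P) = pscale sc c (mult_monom \<alpha> P)" for \<alpha> P
    by (rule additive_poly_mapping_eqI[OF
          additive_comp[OF additive_mult_monom additive_scale[OF mp]]
          additive_comp[OF additive_scale[OF mp] additive_mult_monom]])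
       (simp add: pscale_single[OF m])
  show ?thesis
    by (rule additive_poly_mapping_eqI[OF
          additive_comp[OF additive_flatten additive_scale[OF module_pscale[OF mp]]]
          additive_comp[OF additive_scale[OF mp] additive_flatten]])
       (simp add: pscale_single[OF mp] mult_monom_pscale)
qed

lemma map_apply_pscale:
  "Poly_Mapping.map (\<lambda>f. f u) (pscale (fscale sc) c F)
     = pscale (pscale sc) c (Poly_Mapping.map (\<lambda>f. f u) F)"
  by (rule poly_mapping_eqI)
     (simp add: lookup_map_zero lookup_pscale[OF module_pscale[OF m]]
       lookup_pscale[OF module_fscale[OF m]] fscale_def)

lemma map_apply_int_tensor:
  "Poly_Mapping.map (\<lambda>f. f u) (int_tensor (fscale sc) c Q) = int_tensor (pscale sc) (c u) Q"
  by (rule poly_mapping_eqI)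
     (simp add: lookup_map_zero lookup_int_tensor[OF m] fscale_def
       lookup_int_tensor[OF module_pscale[OF m]] lookup_int_tensor[OF module_fscale[OF m]])

lemma flatten_int_tensor:
  "flatten (int_tensor (pscale sc) (int_tensor sc b Q') Q) = int_tensor sc b (Q * Q')"
proof -
  have mp: "Modules.module (pscale sc)" by (rule module_pscale[OF m])
  have "flatten (int_tensor (pscale sc) (int_tensor sc b Q') (Poly_Mapping.single \<gamma> i))
      = int_tensor sc b (Poly_Mapping.single \<gamma> i * Q')" for \<gamma> i
    by (rule additive_poly_mapping_eqI[OF
          additive_comp[OF additive_flatten
            additive_comp[OF additive_int_tensor[OF mp] additive_int_tensor_right[OF m]]]
          additive_comp[OF additive_int_tensor_right[OF m] additive_mult_right]])
       (simp add: int_tensor_single[OF m] int_tensor_single[OF mp] pscale_single[OF m] mult_single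
          module.scale_scale[OF m])
  then show ?thesis
    by (rule additive_poly_mapping_eqI[OF
          additive_comp[OF additive_flatten additive_int_tensor_right[OF mp]]
          additive_comp[OF additive_int_tensor_right[OF m] additive_mult_left]])
qed

lemma flatten_int_tensor_sact:
  "flatten (int_tensor (pscale sc) (sact sc \<phi> p R) (sact_monomial \<phi> p \<alpha>))
     = sact sc \<phi> p (mult_monom \<alpha> R)"
  by (rule additive_poly_mapping_eqI[OF
        additive_comp[OF additive_flatten
          additive_comp[OF additive_int_tensor[OF module_pscale[OF m]] additive_sact]]
        additive_comp[OF additive_sact additive_mult_monom]])
     (simp add: sact_single flatten_int_tensor sact_monomial_add)

lemma flatten_map_apply_sact:
  assumes "\<And>\<alpha>. \<alpha> \<in> Poly_Mapping.keys F \<Longrightarrow>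
    Poly_Mapping.lookup F \<alpha> u' = sact sc \<phi> p (Poly_Mapping.lookup F \<alpha> u)"
  shows "flatten (Poly_Mapping.map (\<lambda>f. f u') (sact (fscale sc) \<phi> p F))
       = sact sc \<phi> p (flatten (Poly_Mapping.map (\<lambda>f. f u) F))"
proof -
  have add: "additive (Poly_Mapping.map (\<lambda>f::'x \<Rightarrow> 'd simplexalg. f v))" for v
    by (rule additive_map[OF additive_apply])
  have "flatten (Poly_Mapping.map (\<lambda>f. f u') (sact (fscale sc) \<phi> p F))
      = (\<Sum>\<alpha>\<in>Poly_Mapping.keys F. flatten (int_tensor (pscale sc) (Poly_Mapping.lookup F \<alpha> u')
          (sact_monomial \<phi> p \<alpha>)))"
    unfolding sact_eq_pm_extend pm_extend_def
    by (simp add: additive.sum[OF add] additive.sum[OF additive_flatten] map_apply_int_tensor)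
  also have "\<dots> = (\<Sum>\<alpha>\<in>Poly_Mapping.keys F. sact sc \<phi> p (mult_monom \<alpha> (Poly_Mapping.lookup F \<alpha> u)))"
    by (rule sum.cong[OF refl]) (simp add: assms flatten_int_tensor_sact)
  also have "\<dots> = sact sc \<phi> p (flatten (Poly_Mapping.map (\<lambda>f. f u) F))"
  proof -
    have "Poly_Mapping.map (\<lambda>f. f u) F
        = (\<Sum>\<alpha>\<in>Poly_Mapping.keys F. Poly_Mapping.single \<alpha> (Poly_Mapping.lookup F \<alpha> u))"
      using additive_eq_pm_extend[OF add, of u F] by (simp add: pm_extend_def)
    then show ?thesis
      by (simp add: additive.sum[OF additive_sact] additive.sum[OF additive_flatten])
  qed
  finally show ?thesis .
qed

end

section \<open>Ordered complexes and simplicial maps\<close>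

lemma hle_refl [simp]: "hle x x"
  by (cases x) (auto intro: list_all2_refl)

lemma hle_trans: "hle x y \<Longrightarrow> hle y z \<Longrightarrow> hle x z"
proof (induction x y rule: hle.induct)
  case (1 xs ys)
  then obtain zs where "z = Leaf zs" "list_all2 (\<le>) ys zs" by (cases z) auto
  with 1 show ?case
    using list_all2_trans[of "(\<le>)" "(\<le>)" "(\<le>)" xs ys zs] by (simp add: order_trans)
next
  case (2 A B)
  then show ?case by (cases z) auto
qed simp_all

lemma hle_antisym: "hle x y \<Longrightarrow> hle y x \<Longrightarrow> x = y"
proof (induction x y rule: hle.induct)
  case (1 xs ys)
  then show ?case
    using list_all2_antisym[of "(\<le>)" "(\<le>)" xs ys] by (simp add: order_antisym)
qed simp_all

lemma chain_hf_subset: "chain_hf c \<Longrightarrow> d |\<subseteq>| c \<Longrightarrow> chain_hf d"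
  unfolding chain_hf_def by blast

lemma hle_chain_has_max:
  assumes "finite X" "X \<noteq> {}" "\<forall>x\<in>X. \<forall>y\<in>X. hle x y \<or> hle y x"
  shows "\<exists>m\<in>X. \<forall>y\<in>X. hle y m"
  using assms
proof (induction X rule: finite_ne_induct)
  case (insert x F)
  then obtain m where m: "m \<in> F" "\<forall>y\<in>F. hle y m" by auto
  show ?case
  proof (cases "hle m x")
    case True
    then show ?thesis using m by (auto intro: hle_trans)
  next
    case False
    then have "hle x m" using insert.prems m(1) by auto
    then show ?thesis using m by auto
  qed
qed simp

lemma chain_hf_has_max:
  assumes "chain_hf c" "c \<noteq> {||}"
  obtains m where "m |\<in>| c" "\<And>y. y |\<in>| c \<Longrightarrow> hle y m"
proof -
  have "fset c \<noteq> {}" using assms(2) by (metis bot_fset.rep_eq fset_inject)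
  then show ?thesis
    using hle_chain_has_max[of "fset c"] assms(1) that unfolding chain_hf_def by auto
qed

lemma lastv_max:
  assumes "chain_hf c" "c \<noteq> {||}"
  shows "lastv (Node c) |\<in>| c" "y |\<in>| c \<Longrightarrow> hle y (lastv (Node c))"
proof -
  obtain m where m: "m |\<in>| c" "\<And>y. y |\<in>| c \<Longrightarrow> hle y m"
    using chain_hf_has_max[OF assms] by blast
  have "lastv (Node c) = m"
    unfolding lastv.simps by (rule the_equality) (use m in \<open>auto intro: hle_antisym\<close>)
  then show "lastv (Node c) |\<in>| c" "y |\<in>| c \<Longrightarrow> hle y (lastv (Node c))"
    using m by auto
qed

lemma lastv_singleton [simp]: "lastv (Node {|x|}) = x"
  by (simp, rule the_equality) auto

definition closed_complex :: "hf fset set \<Rightarrow> bool" where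
  "closed_complex S \<longleftrightarrow> (\<forall>c\<in>S. c \<noteq> {||} \<and> chain_hf c) \<and>
     (\<forall>c\<in>S. \<forall>d. d |\<subseteq>| c \<longrightarrow> d \<noteq> {||} \<longrightarrow> d \<in> S)"

lemma closed_complex_chains: "closed_complex {c. c \<noteq> {||} \<and> fset c \<subseteq> V \<and> chain_hf c}"
  unfolding closed_complex_def by (auto intro: chain_hf_subset)

lemma closed_complex_restrict:
  assumes "closed_complex S" "\<And>c d. Q c \<Longrightarrow> d |\<subseteq>| c \<Longrightarrow> Q d"
  shows "closed_complex {c \<in> S. Q c}"
  using assms unfolding closed_complex_def by (simp (no_asm_simp)) metis

lemma closed_complex_sd: "closed_complex (sd S)"
  unfolding sd_def by (rule closed_complex_chains)

lemma closed_complex_sd_pow: "closed_complex S \<Longrightarrow> closed_complex ((sd ^^ k) S)"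
proof (cases k)
  case (Suc j)
  then show ?thesis using closed_complex_sd[of "(sd ^^ j) S"] by (simp only: funpow.simps o_apply)
qed simp

lemma closed_complex_cube: "closed_complex (cube m)"
  unfolding cube_def by (rule closed_complex_chains)

lemma closed_complex_sd_pow_cube: "closed_complex ((sd ^^ k) (cube m))"
  by (rule closed_complex_sd_pow[OF closed_complex_cube])

lemma closed_complex_cube_bdry: "closed_complex (cube_bdry m)"
  unfolding cube_bdry_def
  by (rule closed_complex_restrict[OF closed_complex_cube]) (meson fsubsetD)

lemma singleton_vertex:
  "closed_complex S \<Longrightarrow> xs \<in> simplices S p \<Longrightarrow> v \<in> set xs \<Longrightarrow> {|v|} \<in> S"
  unfolding closed_complex_def simplices_def
  by (metis (no_types, lifting) bot_fset.rep_eq empty_iff fset_of_list_elem fsingleton_iff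
      fsubsetI mem_Collect_eq)

lemma face_simplices:
  assumes "closed_complex S" "xs \<in> simplices S q" "monotone_map p q \<phi>"
  shows "map (\<lambda>j. xs ! \<phi> j) [0..<Suc p] \<in> simplices S p"
proof -
  have xs: "length xs = Suc q" "sorted_wrt hle xs" "fset_of_list xs \<in> S"
    using assms(2) by (auto simp: simplices_def)
  have \<phi>: "\<And>i j. i \<le> j \<Longrightarrow> j \<le> p \<Longrightarrow> \<phi> i \<le> \<phi> j" "\<And>j. j \<le> p \<Longrightarrow> \<phi> j < length xs"
    using assms(3) xs(1) by (auto simp: monotone_map_def less_Suc_eq_le)
  let ?ys = "map (\<lambda>j. xs ! \<phi> j) [0..<Suc p]"
  have "sorted_wrt hle ?ys"
  proof (rule sorted_wrt_iff_nth_less[THEN iffD2], intro allI impI)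
    fix i j assume "i < j" "j < length ?ys"
    then have "\<phi> i = \<phi> j \<or> \<phi> i < \<phi> j" "\<phi> j < length xs" using \<phi> by (auto intro: le_neq_trans)
    then show "hle (?ys ! i) (?ys ! j)"
      using xs(2) \<open>i < j\<close> \<open>j < length ?ys\<close>
      by (auto simp: sorted_wrt_iff_nth_less simp del: upt_Suc)
  qed
  moreover have "fset_of_list ?ys \<in> S"
  proof -
    have "fset_of_list ?ys |\<subseteq>| fset_of_list xs"
      using \<phi>(2) by (auto simp: fset_of_list_elem less_Suc_eq_le simp del: upt_Suc)
    moreover have "xs ! \<phi> 0 |\<in>| fset_of_list ?ys" by (simp add: fset_of_list_elem del: upt_Suc)
    ultimately show ?thesis using assms(1) xs(3) unfolding closed_complex_def by blast
  qed
  ultimately show ?thesis by (simp add: simplices_def del: upt_Suc)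
qed

definition simplicial_map :: "hf fset set \<Rightarrow> hf fset set \<Rightarrow> (hf \<Rightarrow> hf) \<Rightarrow> bool" where
  "simplicial_map S T G \<longleftrightarrow> (\<forall>c\<in>S. G |`| c \<in> T) \<and>
     (\<forall>c\<in>S. \<forall>x y. x |\<in>| c \<longrightarrow> y |\<in>| c \<longrightarrow> hle x y \<longrightarrow> hle (G x) (G y))"

lemma simplicial_map_simplices:
  assumes "simplicial_map S T G" "xs \<in> simplices S p"
  shows "map G xs \<in> simplices T p"
proof -
  have xs: "fset_of_list xs \<in> S" "sorted_wrt hle xs" "length xs = Suc p"
    using assms(2) by (auto simp: simplices_def)
  have "sorted_wrt hle (map G xs)"
    unfolding sorted_wrt_map
  proof (rule sorted_wrt_mono_rel[OF _ xs(2)])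
    show "x \<in> set xs \<Longrightarrow> y \<in> set xs \<Longrightarrow> hle x y \<Longrightarrow> hle (G x) (G y)" for x y
      using assms(1) xs(1) unfolding simplicial_map_def by (simp add: fset_of_list_elem)
  qed
  then show ?thesis
    using assms(1) xs unfolding simplices_def simplicial_map_def by simp
qed

lemma simplicial_map_all_simplices:
  "simplicial_map S T G \<Longrightarrow> xs \<in> all_simplices S \<Longrightarrow> map G xs \<in> all_simplices T"
  unfolding all_simplices_def using simplicial_map_simplices by (meson UN_iff)

lemma simplicial_map_id: "simplicial_map S S id"
  unfolding simplicial_map_def by (simp add: fset.map_id0)

lemma simplicial_map_comp:
  assumes "simplicial_map S T G" "simplicial_map T U G'"
  shows "simplicial_map S U (G' \<circ> G)"
  unfolding simplicial_map_def
proof (intro conjI ballI allI impI)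
  fix c assume "c \<in> S"
  then have "G |`| c \<in> T" using assms(1) unfolding simplicial_map_def by blast
  then have "G' |`| (G |`| c) \<in> U" using assms(2) unfolding simplicial_map_def by blast
  then show "(G' \<circ> G) |`| c \<in> U" by (simp add: fset.map_comp)
next
  fix c x y assume "c \<in> S" "x |\<in>| c" "y |\<in>| c" "hle x y"
  then have "G |`| c \<in> T" "hle (G x) (G y)"
    using assms(1) unfolding simplicial_map_def by blast+
  moreover have "G x |\<in>| G |`| c" "G y |\<in>| G |`| c" using \<open>x |\<in>| c\<close> \<open>y |\<in>| c\<close> by auto
  ultimately show "hle ((G' \<circ> G) x) ((G' \<circ> G) y)"
    using assms(2) unfolding simplicial_map_def by auto
qed

lemma simplicial_map_chains:
  assumes "\<And>x. x \<in> V \<Longrightarrow> G x \<in> W" "\<And>x y. x \<in> V \<Longrightarrow> y \<in> V \<Longrightarrow> hle x y \<Longrightarrow> hle (G x) (G y)"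
  shows "simplicial_map {c. c \<noteq> {||} \<and> fset c \<subseteq> V \<and> chain_hf c}
           {c. c \<noteq> {||} \<and> fset c \<subseteq> W \<and> chain_hf c} G"
  unfolding simplicial_map_def
proof (intro conjI ballI allI impI)
  fix c assume c: "c \<in> {c. c \<noteq> {||} \<and> fset c \<subseteq> V \<and> chain_hf c}"
  have "chain_hf (G |`| c)"
    unfolding chain_hf_def
  proof (intro ballI)
    fix u v assume "u \<in> fset (G |`| c)" "v \<in> fset (G |`| c)"
    then obtain x y where xy: "x |\<in>| c" "y |\<in>| c" "u = G x" "v = G y" by auto
    then have "hle x y \<or> hle y x" "x \<in> V" "y \<in> V" using c unfolding chain_hf_def by auto
    then show "hle u v \<or> hle v u" using assms(2) xy by blast
  qed
  then show "G |`| c \<in> {c. c \<noteq> {||} \<and> fset c \<subseteq> W \<and> chain_hf c}"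
    using c assms(1) by auto
next
  fix c x y assume "c \<in> {c. c \<noteq> {||} \<and> fset c \<subseteq> V \<and> chain_hf c}" "x |\<in>| c" "y |\<in>| c" "hle x y"
  then show "hle (G x) (G y)" using assms(2) by auto
qed

lemma simplicial_map_sd:
  assumes "simplicial_map S T G" "\<And>A. A \<in> S \<Longrightarrow> G' (Node A) = Node (G |`| A)"
  shows "simplicial_map (sd S) (sd T) G'"
  unfolding sd_def
proof (rule simplicial_map_chains)
  show "x \<in> Node ` S \<Longrightarrow> G' x \<in> Node ` T" for x
    using assms unfolding simplicial_map_def by auto
  show "x \<in> Node ` S \<Longrightarrow> y \<in> Node ` S \<Longrightarrow> hle x y \<Longrightarrow> hle (G' x) (G' y)" for x y
    using assms(2) by (auto simp: fimage_mono)
qed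

lemma simplicial_map_vmap_sd_pow:
  "simplicial_map S T (vmap g) \<Longrightarrow> simplicial_map ((sd ^^ k) S) ((sd ^^ k) T) (vmap g)"
  by (induction k) (auto intro: simplicial_map_sd)

lemma simplicial_map_lastv:
  assumes "closed_complex T"
  shows "simplicial_map (sd T) T lastv"
proof -
  have last: "lastv (Node A) |\<in>| A" "y |\<in>| A \<Longrightarrow> hle y (lastv (Node A))" if "A \<in> T" for A y
  proof -
    have "chain_hf A" "A \<noteq> {||}" using assms that unfolding closed_complex_def by auto
    then show "lastv (Node A) |\<in>| A" "y |\<in>| A \<Longrightarrow> hle y (lastv (Node A))" by (rule lastv_max)+
  qed
  have mono: "hle (lastv x) (lastv y)" if xy: "x \<in> Node ` T" "y \<in> Node ` T" "hle x y" for x y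
  proof -
    obtain A B where "x = Node A" "y = Node B" "A \<in> T" "B \<in> T" "A |\<subseteq>| B"
      using xy by auto
    then show ?thesis using last by blast
  qed
  have "lastv |`| c \<in> T" if c: "c \<in> sd T" for c
  proof -
    have c': "chain_hf c" "c \<noteq> {||}" "fset c \<subseteq> Node ` T" using c by (auto simp: sd_def)
    obtain m where m: "m |\<in>| c" "\<And>y. y |\<in>| c \<Longrightarrow> hle y m"
      using chain_hf_has_max[OF c'(1,2)] by blast
    obtain M where M: "m = Node M" "M \<in> T" using m(1) c'(3) by auto
    have "lastv |`| c |\<subseteq>| M"
    proof
      fix z assume "z |\<in>| lastv |`| c"
      then obtain x where x: "x |\<in>| c" "z = lastv x" by auto
      then obtain A where A: "x = Node A" "A \<in> T" using c'(3) by auto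
      then have "A |\<subseteq>| M" using m(2)[OF x(1)] M(1) by simp
      then show "z |\<in>| M" using last(1)[OF A(2)] A x by auto
    qed
    moreover have "lastv |`| c \<noteq> {||}" using c'(2) by simp
    ultimately show ?thesis using assms M(2) unfolding closed_complex_def by blast
  qed
  moreover have "hle (lastv x) (lastv y)" if "c \<in> sd T" "x |\<in>| c" "y |\<in>| c" "hle x y" for c x y
  proof -
    have "x \<in> Node ` T" "y \<in> Node ` T" using that(1-3) unfolding sd_def by auto
    then show ?thesis using mono that(4) by blast
  qed
  ultimately show ?thesis unfolding simplicial_map_def by blast
qed

lemma simplicial_map_lastv_pow:
  assumes "closed_complex T"
  shows "simplicial_map ((sd ^^ (k + s)) T) ((sd ^^ k) T) (lastv ^^ s)"
proof (induction s)
  case 0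
  then show ?case using simplicial_map_id by (simp add: id_def)
next
  case (Suc s)
  have "closed_complex ((sd ^^ (k + s)) T)" by (rule closed_complex_sd_pow[OF assms])
  have "(sd ^^ (k + Suc s)) T = sd ((sd ^^ (k + s)) T)" by simp
  with simplicial_map_comp[OF simplicial_map_lastv[OF \<open>closed_complex ((sd ^^ (k + s)) T)\<close>] Suc]
  show ?case by (simp only: funpow_Suc_right)
qed

lemma simplicial_map_vmap_cube:
  assumes "\<And>xs. length xs = a \<Longrightarrow> length (g xs) = b"
    and "\<And>xs ys. length xs = a \<Longrightarrow> length ys = a \<Longrightarrow> list_all2 (\<le>) xs ys \<Longrightarrow> list_all2 (\<le>) (g xs) (g ys)"
  shows "simplicial_map (cube a) (cube b) (vmap g)"
  unfolding cube_def by (rule simplicial_map_chains) (use assms in auto)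

lemma simplicial_map_butlast: "simplicial_map (cube (Suc n)) (cube n) (vmap butlast)"
  by (rule simplicial_map_vmap_cube)
     (auto simp: butlast_conv_take list_all2_lengthD intro: list_all2_takeI)

lemma simplicial_map_last: "simplicial_map (cube (Suc n)) (cube 1) (vmap (\<lambda>xs. [last xs]))"
proof (rule simplicial_map_vmap_cube)
  fix xs ys :: "bool list"
  assume "length xs = Suc n" "length ys = Suc n" "list_all2 (\<le>) xs ys"
  then have "xs ! n \<le> ys ! n" using list_all2_nthD[of "(\<le>)" xs ys n] by simp
  moreover have "last xs = xs ! n" "last ys = ys ! n"
    using \<open>length xs = Suc n\<close> \<open>length ys = Suc n\<close>
    by (metis last_conv_nth diff_Suc_1 list.size(3) nat.distinct(1))+
  ultimately show "list_all2 (\<le>) [last xs] [last ys]" by simp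
qed simp

lemma simplicial_map_append: "simplicial_map (cube n) (cube (Suc n)) (vmap (\<lambda>xs. xs @ [i]))"
  by (rule simplicial_map_vmap_cube) (auto intro: list_all2_appendI)

lemma simplicial_map_butlast_bdry: "simplicial_map (cyl_bdry n) (cube_bdry n) (vmap butlast)"
proof -
  have "vmap butlast |`| c \<in> cube_bdry n" if c: "c \<in> cyl_bdry n" for c
  proof -
    obtain j b where jb: "j < n" "\<forall>x\<in>fset c. \<exists>xs. x = Leaf xs \<and> xs ! j = b"
      and c': "c \<in> cube (Suc n)"
      using c unfolding cyl_bdry_def by blast
    have "\<exists>ys. u = Leaf ys \<and> ys ! j = b" if "u \<in> fset (vmap butlast |`| c)" for u
    proof -
      obtain x where x: "x |\<in>| c" "u = vmap butlast x"
        using \<open>u \<in> fset (vmap butlast |`| c)\<close> by auto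
      then obtain xs where "x = Leaf xs" "xs ! j = b" using jb(2) by auto
      moreover have "length xs = Suc n" using c' x(1) \<open>x = Leaf xs\<close> unfolding cube_def by auto
      ultimately show ?thesis using x(2) jb(1) by (simp add: nth_butlast)
    qed
    moreover have "vmap butlast |`| c \<in> cube n"
      using simplicial_map_butlast c' unfolding simplicial_map_def by blast
    ultimately show ?thesis unfolding cube_bdry_def using jb(1) by blast
  qed
  then show ?thesis
    using simplicial_map_butlast unfolding simplicial_map_def cyl_bdry_def by blast
qed

lemma vmap_comp: "vmap f (vmap g v) = vmap (f \<circ> g) v"
  by (induction v) (auto simp: fset.map_comp intro: fset.map_cong0)

lemma vmap_id: "vmap id v = v"
  by (induction v) (auto simp: fset.map_ident_strong)

lemma d_vertex_Suc: "d_vertex (Suc k) i = Node {|d_vertex k i|}"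
  by (simp add: d_vertex_def sdpt_def)

lemma vmap_const_vertex:
  "{|v|} \<in> (sd ^^ k) (cube m) \<Longrightarrow> vmap (\<lambda>_. [i]) v = d_vertex k i"
proof (induction k arbitrary: v)
  case 0
  then show ?case by (auto simp: cube_def d_vertex_def sdpt_def)
next
  case (Suc k)
  then have "{|v|} \<in> sd ((sd ^^ k) (cube m))" by simp
  then have "v \<in> Node ` (sd ^^ k) (cube m)" unfolding sd_def[of "(sd ^^ k) (cube m)"] by simp
  then obtain A where A: "v = Node A" "A \<in> (sd ^^ k) (cube m)" by blast
  have closed: "closed_complex ((sd ^^ k) (cube m))" by (rule closed_complex_sd_pow_cube)
  then have "A \<noteq> {||}" using A(2) unfolding closed_complex_def by blast
  moreover have "vmap (\<lambda>_. [i]) w = d_vertex k i" if "w |\<in>| A" for w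
    using Suc.IH closed A(2) that unfolding closed_complex_def by blast
  ultimately have "vmap (\<lambda>_. [i]) |`| A = {|d_vertex k i|}" by fastforce
  then show ?case using A(1) by (simp add: d_vertex_Suc)
qed

lemma lastv_pow_d_vertex: "(lastv ^^ r) (d_vertex (s + r) i) = d_vertex s i"
proof (induction r)
  case (Suc r)
  have "(lastv ^^ Suc r) (d_vertex (s + Suc r) i) = (lastv ^^ r) (lastv (d_vertex (Suc (s + r)) i))"
    by (simp only: funpow_Suc_right o_apply add_Suc_right)
  also have "\<dots> = d_vertex s i" by (simp only: d_vertex_Suc lastv_singleton Suc.IH)
  finally show ?case .
qed simp

lemma smaps_face:
  "f \<in> smaps sc Dc S \<Longrightarrow> monotone_map p q \<phi> \<Longrightarrow> xs \<in> simplices S q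
    \<Longrightarrow> f (map (\<lambda>j. xs ! \<phi> j) [0..<Suc p]) = sact sc \<phi> p (f xs)"
  unfolding smaps_def by blast

lemma smaps_coeff:
  assumes "f \<in> smaps sc Dc S" "xs \<in> simplices S p" "\<alpha> \<in> Poly_Mapping.keys (f xs)"
  shows "Poly_Mapping.lookup (f xs) \<alpha> \<in> Dc" "Poly_Mapping.keys \<alpha> \<subseteq> {1..p}"
  using assms unfolding smaps_def dlevel_def by blast+

lemma smaps_vertex:
  assumes "f \<in> smaps sc Dc S" "[v] \<in> simplices S 0"
  shows "f [v] = Poly_Mapping.single 0 (eval_pt f v)"
proof (rule poly_mapping_eqI)
  fix k
  have "k = 0" if "k \<in> Poly_Mapping.keys (f [v])"
    using smaps_coeff(2)[OF assms that] by simp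
  then show "Poly_Mapping.lookup (f [v]) k
      = Poly_Mapping.lookup (Poly_Mapping.single 0 (eval_pt f v)) k"
    by (cases "k = 0") (auto simp: eval_pt_def lookup_single in_keys_iff)
qed

lemma smaps_replicate:
  assumes "Modules.module sc" "f \<in> smaps sc Dc S" "[v] \<in> simplices S 0"
  shows "f (replicate (Suc p) v) = Poly_Mapping.single 0 (eval_pt f v)"
proof -
  have "monotone_map p 0 (\<lambda>_. 0)" by (simp add: monotone_map_def)
  from smaps_face[OF assms(2) this assms(3)]
  have "f (replicate (Suc p) v) = sact sc (\<lambda>_. 0) p (f [v])"
    by (simp add: map_replicate_const del: upt_Suc)
  then show ?thesis
    by (simp add: smaps_vertex[OF assms(2,3)] sact_single[OF assms(1)]
        int_tensor_single[OF assms(1)] module.scale_one[OF assms(1)] flip: single_one)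
qed

section \<open>The prism construction\<close>

text \<open>For simplicial maps G1 : S \<rightarrow> T and G2 : S \<rightarrow> U this is the map (D^T)^U \<rightarrow> D^S induced by
  (G1, G2) : S \<rightarrow> T \<times> U: evaluate the coefficients at G1 xs, then flatten.\<close>
definition uncurry_smap :: "hf fset set \<Rightarrow> (hf \<Rightarrow> hf) \<Rightarrow> (hf \<Rightarrow> hf)
    \<Rightarrow> (hf list \<Rightarrow> (hf list \<Rightarrow> 'd::ab_group_add simplexalg) simplexalg) \<Rightarrow> hf list \<Rightarrow> 'd simplexalg" where
  "uncurry_smap S G1 G2 F xs = (if xs \<in> all_simplices S
     then flatten (Poly_Mapping.map (\<lambda>f. f (map G1 xs)) (F (map G2 xs))) else 0)"

lemma uncurry_smap_add:
  "uncurry_smap S G1 G2 (F + F') = uncurry_smap S G1 G2 F + uncurry_smap S G1 G2 F'"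
  by (rule ext)
     (simp add: uncurry_smap_def additive.add[OF additive_map[OF additive_apply]]
       additive.add[OF additive_flatten])

lemma uncurry_smap_mult:
  fixes F F' :: "hf list \<Rightarrow> (hf list \<Rightarrow> 'd::ring simplexalg) simplexalg"
  shows "uncurry_smap S G1 G2 (F * F') = uncurry_smap S G1 G2 F * uncurry_smap S G1 G2 F'"
  by (rule ext) (simp add: uncurry_smap_def map_mult[OF additive_apply] flatten_mult)

lemma uncurry_smap_scale:
  assumes "Modules.module sc"
  shows "uncurry_smap S G1 G2 (fscale (fscale sc) c F) = fscale sc c (uncurry_smap S G1 G2 F)"
  by (rule ext)
     (simp add: uncurry_smap_def fscale_def map_apply_pscale[OF assms] flatten_pscale[OF assms]
       module.scale_zero_right[OF module_pscale[OF assms]])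

context
  fixes sc :: "'l::comm_ring_1 \<Rightarrow> 'd::ab_group_add \<Rightarrow> 'd"
    and S T U :: "hf fset set" and G1 G2 :: "hf \<Rightarrow> hf" and C and F
  assumes G1: "simplicial_map S T G1" and G2: "simplicial_map S U G2"
    and F: "F \<in> smaps (fscale sc) C U" and C: "C \<subseteq> smaps sc UNIV T"
begin

lemma uncurry_smap_level:
  assumes xs: "xs \<in> simplices S p"
  shows "uncurry_smap S G1 G2 F xs \<in> dlevel UNIV p"
proof -
  have T: "map G1 xs \<in> simplices T p" and U: "map G2 xs \<in> simplices U p"
    using simplicial_map_simplices[OF G1 xs] simplicial_map_simplices[OF G2 xs] .
  let ?F = "Poly_Mapping.map (\<lambda>f. f (map G1 xs)) (F (map G2 xs))"
  have "Poly_Mapping.keys \<beta> \<subseteq> {1..p}" if \<beta>: "\<beta> \<in> Poly_Mapping.keys (flatten ?F)" for \<beta>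
  proof -
    obtain \<alpha> \<gamma> where \<alpha>: "\<alpha> \<in> Poly_Mapping.keys ?F"
      and \<gamma>: "\<gamma> \<in> Poly_Mapping.keys (Poly_Mapping.lookup ?F \<alpha>)" and "\<beta> = \<alpha> + \<gamma>"
      using keys_flatten[OF \<beta>] .
    have \<alpha>': "\<alpha> \<in> Poly_Mapping.keys (F (map G2 xs))" by (rule subsetD[OF keys_map_subset \<alpha>]) simp
    have "Poly_Mapping.lookup (F (map G2 xs)) \<alpha> \<in> smaps sc UNIV T"
      using smaps_coeff(1)[OF F U \<alpha>'] C by blast
    moreover have "\<gamma> \<in> Poly_Mapping.keys (Poly_Mapping.lookup (F (map G2 xs)) \<alpha> (map G1 xs))"
      using \<gamma> by (simp add: lookup_map_zero)
    ultimately have "Poly_Mapping.keys \<gamma> \<subseteq> {1..p}" by (rule smaps_coeff(2)[OF _ T])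
    then show ?thesis
      using smaps_coeff(2)[OF F U \<alpha>'] keys_add[of \<alpha> \<gamma>] \<open>\<beta> = \<alpha> + \<gamma>\<close> by auto
  qed
  moreover have "xs \<in> all_simplices S" using xs by (auto simp: all_simplices_def)
  ultimately show ?thesis by (simp add: uncurry_smap_def dlevel_def)
qed

lemma uncurry_smap_face:
  assumes m: "Modules.module sc" and S: "closed_complex S"
    and \<phi>: "monotone_map p q \<phi>" and xs: "xs \<in> simplices S q"
  shows "uncurry_smap S G1 G2 F (map (\<lambda>j. xs ! \<phi> j) [0..<Suc p])
       = sact sc \<phi> p (uncurry_smap S G1 G2 F xs)"
proof -
  let ?face = "\<lambda>ys. map (\<lambda>j. ys ! \<phi> j) [0..<Suc p]"
  have len: "length xs = Suc q" using xs by (simp add: simplices_def)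
  have map_face: "map G (?face xs) = ?face (map G xs)" for G
    using \<phi> len by (auto simp: monotone_map_def less_Suc_eq_le simp del: upt_Suc)
  have T: "map G1 xs \<in> simplices T q" and U: "map G2 xs \<in> simplices U q"
    using simplicial_map_simplices[OF G1 xs] simplicial_map_simplices[OF G2 xs] .
  have "F (map G2 (?face xs)) = sact (fscale sc) \<phi> p (F (map G2 xs))"
    unfolding map_face by (rule smaps_face[OF F \<phi> U])
  moreover have "Poly_Mapping.lookup (F (map G2 xs)) \<alpha> (map G1 (?face xs))
      = sact sc \<phi> p (Poly_Mapping.lookup (F (map G2 xs)) \<alpha> (map G1 xs))"
    if "\<alpha> \<in> Poly_Mapping.keys (F (map G2 xs))" for \<alpha>
    unfolding map_face using smaps_coeff(1)[OF F U that] C by (intro smaps_face[OF _ \<phi> T]) blast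
  moreover have "xs \<in> all_simplices S" "?face xs \<in> all_simplices S"
    using xs face_simplices[OF S xs \<phi>] unfolding all_simplices_def by blast+
  ultimately show ?thesis
    unfolding uncurry_smap_def by (simp add: flatten_map_apply_sact[OF m])
qed

lemma uncurry_smap_in_smaps:
  assumes "Modules.module sc" "closed_complex S"
  shows "uncurry_smap S G1 G2 F \<in> smaps sc UNIV S"
  unfolding smaps_def
  using uncurry_smap_level uncurry_smap_face[OF assms] by (auto simp: uncurry_smap_def)

lemma uncurry_smap_vanishes:
  assumes "simplicial_map L L0 G1" "\<And>c zs. c \<in> C \<Longrightarrow> zs \<in> all_simplices L0 \<Longrightarrow> c zs = 0"
    and "xs \<in> all_simplices L"
  shows "uncurry_smap S G1 G2 F xs = 0"
proof (cases "xs \<in> all_simplices S")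
  case True
  then obtain q where "xs \<in> simplices S q" unfolding all_simplices_def by blast
  then have U: "map G2 xs \<in> simplices U q" by (rule simplicial_map_simplices[OF G2])
  have "map G1 xs \<in> all_simplices L0" by (rule simplicial_map_all_simplices[OF assms(1,3)])
  then have "Poly_Mapping.map (\<lambda>f. f (map G1 xs)) (F (map G2 xs)) = 0"
    using smaps_coeff(1)[OF F U] assms(2) by (simp add: map_eq_zero_iff)
  then show ?thesis using True by (simp add: uncurry_smap_def additive.zero[OF additive_flatten])
qed (simp add: uncurry_smap_def)

lemma uncurry_smap_const:
  assumes m: "Modules.module sc" and U: "closed_complex U"
    and xs: "xs \<in> all_simplices S" and v: "\<And>y. y \<in> set xs \<Longrightarrow> G2 y = v"
  shows "uncurry_smap S G1 G2 F xs = eval_pt F v (map G1 xs)"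
proof -
  obtain p where "xs \<in> simplices S p" using xs unfolding all_simplices_def by blast
  then have len: "length xs = Suc p" and U': "map G2 xs \<in> simplices U p"
    using simplicial_map_simplices[OF G2] by (auto simp: simplices_def)
  have G2xs: "map G2 xs = replicate (Suc p) v"
  proof -
    have "map G2 xs = map (\<lambda>_. v) xs" using v by simp
    then show ?thesis using len by (simp only: map_replicate_const)
  qed
  then have "[v] \<in> simplices U 0"
    using singleton_vertex[OF U U'] by (simp add: simplices_def)
  then have "F (map G2 xs) = Poly_Mapping.single 0 (eval_pt F v)"
    unfolding G2xs by (rule smaps_replicate[OF module_fscale[OF m] F])
  then show ?thesis using xs by (simp add: uncurry_smap_def mult_monom_0)
qed

end

lemma l_alg_hom_uncurry_smap:
  fixes H :: "'a::ring \<Rightarrow> hf list \<Rightarrow> (hf list \<Rightarrow> 'b::ring simplexalg) simplexalg"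
  assumes "Modules.module scB" "l_alg_hom scA (fscale (fscale scB)) Cc H"
    and "\<And>x. uncurry_smap S G1 G2 (H x) \<in> Cc'"
  shows "l_alg_hom scA (fscale scB) Cc' (\<lambda>x. uncurry_smap S G1 G2 (H x))"
  using assms unfolding l_alg_hom_def
  by (simp add: uncurry_smap_add uncurry_smap_mult uncurry_smap_scale)

definition prism_fst :: "nat \<Rightarrow> hf \<Rightarrow> hf" where
  "prism_fst s = (lastv ^^ s) \<circ> vmap butlast"

definition prism_snd :: "nat \<Rightarrow> hf \<Rightarrow> hf" where
  "prism_snd r = (lastv ^^ r) \<circ> vmap (\<lambda>xs. [last xs])"

lemma simplicial_map_prism_fst:
  "simplicial_map ((sd ^^ (r + s)) (cube (Suc n))) ((sd ^^ r) (cube n)) (prism_fst s)"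
  unfolding prism_fst_def
  by (rule simplicial_map_comp[OF simplicial_map_vmap_sd_pow[OF simplicial_map_butlast]
        simplicial_map_lastv_pow[OF closed_complex_cube]])

lemma simplicial_map_prism_fst_bdry:
  "simplicial_map ((sd ^^ (r + s)) (cyl_bdry n)) ((sd ^^ r) (cube_bdry n)) (prism_fst s)"
  unfolding prism_fst_def
  by (rule simplicial_map_comp[OF simplicial_map_vmap_sd_pow[OF simplicial_map_butlast_bdry]
        simplicial_map_lastv_pow[OF closed_complex_cube_bdry]])

lemma simplicial_map_prism_snd:
  "simplicial_map ((sd ^^ (r + s)) (cube (Suc n))) ((sd ^^ s) (cube 1)) (prism_snd r)"
  unfolding prism_snd_def add.commute[of r s]
  by (rule simplicial_map_comp[OF simplicial_map_vmap_sd_pow[OF simplicial_map_last]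
        simplicial_map_lastv_pow[OF closed_complex_cube]])

lemma prism_fst_append: "prism_fst s (vmap (\<lambda>xs. xs @ [i]) v) = (lastv ^^ s) v"
proof -
  have "butlast \<circ> (\<lambda>xs. xs @ [i]) = id" by (rule ext) simp
  then show ?thesis by (simp add: prism_fst_def vmap_comp vmap_id)
qed

lemma prism_snd_append:
  assumes "{|v|} \<in> (sd ^^ (r + s)) (cube n)"
  shows "prism_snd r (vmap (\<lambda>xs. xs @ [i]) v) = d_vertex s i"
proof -
  have "(\<lambda>xs. [last xs]) \<circ> (\<lambda>xs. xs @ [i]) = (\<lambda>_. [i])" by (rule ext) simp
  then have "prism_snd r (vmap (\<lambda>xs. xs @ [i]) v) = (lastv ^^ r) (vmap (\<lambda>_. [i]) v)"
    by (simp add: prism_snd_def vmap_comp)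
  also have "\<dots> = (lastv ^^ r) (d_vertex (s + r) i)"
    using vmap_const_vertex[OF assms] by (simp add: add.commute)
  finally show ?thesis by (simp only: lastv_pow_d_vertex)
qed

definition prism_lift :: "nat \<Rightarrow> nat \<Rightarrow> nat
    \<Rightarrow> (hf list \<Rightarrow> (hf list \<Rightarrow> 'd::ab_group_add simplexalg) simplexalg) \<Rightarrow> hf list \<Rightarrow> 'd simplexalg" where
  "prism_lift n r s = uncurry_smap ((sd ^^ (r + s)) (cube (Suc n))) (prism_fst s) (prism_snd r)"

lemma BS_subset_smaps: "BS sc n r \<subseteq> smaps sc UNIV ((sd ^^ r) (cube n))"
  by (auto simp: BS_def rel_alg_def)

context
  fixes sc :: "'l::comm_ring_1 \<Rightarrow> 'b::ab_group_add \<Rightarrow> 'b" and n r s :: nat and F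
  assumes m: "Modules.module sc"
    and F: "F \<in> smaps (fscale sc) (BS sc n r) ((sd ^^ s) (cube 1))"
begin

lemmas prism_maps = simplicial_map_prism_fst simplicial_map_prism_snd F BS_subset_smaps

lemma prism_lift_in_BSt: "prism_lift n r s F \<in> BSt sc n (r + s)"
  unfolding BSt_def rel_alg_def prism_lift_def
  using uncurry_smap_in_smaps[OF prism_maps m closed_complex_sd_pow_cube]
    uncurry_smap_vanishes[OF prism_maps simplicial_map_prism_fst_bdry]
  by (auto simp: BS_def rel_alg_def)

lemma prism_lift_end:
  "pullback ((sd ^^ (r + s)) (cube n)) (vmap (\<lambda>xs. xs @ [i])) (prism_lift n r s F)
     = pullback ((sd ^^ (r + s)) (cube n)) (lastv ^^ s) (eval_pt F (d_vertex s i))"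
  (is "?lhs = ?rhs")
proof (rule ext)
  fix ys
  show "?lhs ys = ?rhs ys"
  proof (cases "ys \<in> all_simplices ((sd ^^ (r + s)) (cube n))")
    case True
    then obtain p where ys: "ys \<in> simplices ((sd ^^ (r + s)) (cube n)) p"
      unfolding all_simplices_def by blast
    let ?ys = "map (vmap (\<lambda>xs. xs @ [i])) ys"
    have "?ys \<in> all_simplices ((sd ^^ (r + s)) (cube (Suc n)))"
      by (rule simplicial_map_all_simplices[OF
            simplicial_map_vmap_sd_pow[OF simplicial_map_append] True])
    moreover have "prism_snd r y = d_vertex s i" if "y \<in> set ?ys" for y
      using that prism_snd_append[OF singleton_vertex[OF closed_complex_sd_pow_cube ys]] by auto
    ultimately have "prism_lift n r s F ?ys = eval_pt F (d_vertex s i) (map (prism_fst s) ?ys)"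
      unfolding prism_lift_def by (rule uncurry_smap_const[OF prism_maps m closed_complex_sd_pow_cube])
    then show ?thesis using True by (simp add: pullback_def prism_fst_append comp_def)
  qed (simp add: pullback_def)
qed

end

theorem lemma3p7:
  fixes scA :: "'l::comm_ring_1 \<Rightarrow> 'a::ring \<Rightarrow> 'a"
    and scB :: "'l \<Rightarrow> 'b::ring \<Rightarrow> 'b"
    and n r s :: nat
    and H :: "'a \<Rightarrow> hf list \<Rightarrow> (hf list \<Rightarrow> 'b simplexalg) simplexalg"
  assumes "l_algebra scA" and "l_algebra scB"
    and "l_alg_hom scA (fscale (fscale scB))
           (smaps (fscale scB) (BS scB n r) ((sd ^^ s) (cube 1))) H"
  shows "\<exists>Ht. l_alg_hom scA (fscale scB) (BSt scB n (r + s)) Ht \<and>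
           (\<forall>i::bool. \<forall>x.
              pullback ((sd ^^ (r + s)) (cube n)) (vmap (\<lambda>xs. xs @ [i])) (Ht x)
            = pullback ((sd ^^ (r + s)) (cube n)) (lastv ^^ s) (eval_pt (H x) (d_vertex s i)))"
proof -
  have m: "Modules.module scB" using assms(2) by (simp add: l_algebra_def)
  have H: "H x \<in> smaps (fscale scB) (BS scB n r) ((sd ^^ s) (cube 1))" for x
    using assms(3) by (simp add: l_alg_hom_def)
  have "l_alg_hom scA (fscale scB) (BSt scB n (r + s)) (\<lambda>x. prism_lift n r s (H x))"
    using prism_lift_in_BSt[OF m H] unfolding prism_lift_def
    by (rule l_alg_hom_uncurry_smap[OF m assms(3)])
  moreover have "pullback ((sd ^^ (r + s)) (cube n)) (vmap (\<lambda>xs. xs @ [i])) (prism_lift n r s (H x))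
      = pullback ((sd ^^ (r + s)) (cube n)) (lastv ^^ s) (eval_pt (H x) (d_vertex s i))" for i x
    by (rule prism_lift_end[OF m H])
  ultimately show ?thesis by blast
qed

end
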